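(* Let $d\in\mathbb{N}$, $r\in\mathbb{N}$ with $r\ge2$, and set $\delta=r^{-7/2}$, $\sigma=\sqrt{\log(1/\delta)}/r$, $\gamma=\sqrt{\tfrac52\log r}$, $R=1+\gamma(2+\sqrt2)\sqrt d\,\sigma$, $b=(R+1)^2/(4\sigma^2)$, with $K_r$ as in the context. Then \[ \left|K_r(x,y)-\frac1{\sqrt{2\pi}\sigma}\exp\!\left(-\frac{(x-y)^2}{2\sigma^2}\right)\right|\le\frac{3\delta}{\sqrt{2\pi}\sigma}\qquad\forall x\in[-1,1],\ \forall y\in[-R,R]. \]
   Context: $s_{b,\delta}$ is a univariate polynomial of degree $\lceil\sqrt{2\theta\log(4/\delta)}\rceil$, $\theta=\lceil\max\{\tfrac12be^2,\log(2/\delta)\}\rceil$, with $|e^{-t}-s_{b,\delta}(t)|\le\delta$ for all $t\in[0,b]$. $K_r(x,y)=\frac1{\sqrt{2\pi}\sigma}s_{b,\delta}^2\!\left(\frac{(x-y)^2}{4\sigma^2}\right)$. $\log$ is the natural logarithm. *)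

theory Defs
  imports "HOL-Analysis.Analysis" "HOL-Computational_Algebra.Polynomial"
begin

definition theta_par :: "real \<Rightarrow> real \<Rightarrow> nat" where
  "theta_par b \<delta> = nat \<lceil>max (b * exp 1 ^ 2 / 2) (ln (2 / \<delta>))\<rceil>"

definition sdeg :: "real \<Rightarrow> real \<Rightarrow> nat" where
  "sdeg b \<delta> = nat \<lceil>sqrt (2 * real (theta_par b \<delta>) * ln (4 / \<delta>))\<rceil>"

definition is_s_poly :: "real \<Rightarrow> real \<Rightarrow> real poly \<Rightarrow> bool" where
  "is_s_poly b \<delta> s \<longleftrightarrow> degree s = sdeg b \<delta> \<and>
     (\<forall>t\<in>{0..b}. \<bar>exp (- t) - poly s t\<bar> \<le> \<delta>)"

definition Kr :: "real poly \<Rightarrow> real \<Rightarrow> real \<Rightarrow> real \<Rightarrow> real" where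
  "Kr s \<sigma> x y = 1 / (sqrt (2 * pi) * \<sigma>) * (poly s ((x - y)^2 / (4 * \<sigma>^2)))^2"

end

theory Submission
  imports Defs
begin

text \<open>Put \<open>t = (x - y)\<^sup>2 / (4\<sigma>\<^sup>2)\<close>. The Gaussian factor is \<open>exp (-t)\<^sup>2\<close> while \<open>K\<^sub>r\<close> carries
  \<open>s(t)\<^sup>2\<close>, and \<open>|s(t)\<^sup>2 - exp (-t)\<^sup>2| = |s(t) - exp (-t)| |s(t) + exp (-t)| \<le> \<delta> (\<delta> + 2) \<le> 3\<delta>\<close>
  as soon as \<open>t \<in> [0, b]\<close>. For \<open>|x| \<le> 1\<close> and \<open>|y| \<le> R\<close> this holds because \<open>|x - y| \<le> R + 1\<close>,
  which is exactly how \<open>b\<close> was chosen.\<close>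

lemma abs_power2_diff_le:
  fixes p e \<delta> :: real
  assumes "\<bar>p - e\<bar> \<le> \<delta>" and "\<bar>e\<bar> \<le> 1" and "\<delta> \<le> 1"
  shows "\<bar>p\<^sup>2 - e\<^sup>2\<bar> \<le> 3 * \<delta>"
proof -
  have "\<bar>p\<^sup>2 - e\<^sup>2\<bar> = \<bar>p - e\<bar> * \<bar>p + e\<bar>"
    by (simp add: power2_eq_square abs_mult[symmetric] algebra_simps)
  also have "\<dots> \<le> \<delta> * 3"
    using assms by (intro mult_mono) auto
  finally show ?thesis by simp
qed

lemma exp_neg_half_div_eq_power2:
  fixes u \<sigma> :: real
  assumes "\<sigma> \<noteq> 0"
  shows "exp (- (u / (2 * \<sigma>\<^sup>2))) = (exp (- (u / (4 * \<sigma>\<^sup>2))))\<^sup>2"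
proof -
  have "- (u / (2 * \<sigma>\<^sup>2)) = 2 * - (u / (4 * \<sigma>\<^sup>2))"
    using assms by (simp add: field_simps)
  then show ?thesis
    by (simp add: exp_of_nat_mult[symmetric])
qed

lemma Kr_gaussian_error_le:
  fixes s :: "real poly" and \<sigma> \<delta> x y :: real
  assumes "\<sigma> > 0" and "\<delta> \<le> 1"
    and "\<bar>exp (- ((x - y)\<^sup>2 / (4 * \<sigma>\<^sup>2))) - poly s ((x - y)\<^sup>2 / (4 * \<sigma>\<^sup>2))\<bar> \<le> \<delta>"
  shows "\<bar>Kr s \<sigma> x y - 1 / (sqrt (2 * pi) * \<sigma>) * exp (- ((x - y)\<^sup>2 / (2 * \<sigma>\<^sup>2)))\<bar>
           \<le> 3 * \<delta> / (sqrt (2 * pi) * \<sigma>)"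
proof -
  define t where "t = (x - y)\<^sup>2 / (4 * \<sigma>\<^sup>2)"
  have scale_pos: "sqrt (2 * pi) * \<sigma> > 0"
    using assms(1) by simp
  have "\<bar>(poly s t)\<^sup>2 - (exp (- t))\<^sup>2\<bar> \<le> 3 * \<delta>"
    using assms(2,3) unfolding t_def
    by (intro abs_power2_diff_le) (auto simp: abs_minus_commute)
  moreover have "Kr s \<sigma> x y - 1 / (sqrt (2 * pi) * \<sigma>) * exp (- ((x - y)\<^sup>2 / (2 * \<sigma>\<^sup>2)))
      = ((poly s t)\<^sup>2 - (exp (- t))\<^sup>2) / (sqrt (2 * pi) * \<sigma>)"
    using assms(1) unfolding Kr_def t_def
    by (simp add: exp_neg_half_div_eq_power2 diff_divide_distrib)
  ultimately show ?thesis
    using scale_pos by (simp add: divide_right_mono)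
qed

lemma divide_four_sq_le_of_abs_le:
  fixes u c \<sigma> :: real
  assumes "\<bar>u\<bar> \<le> c"
  shows "u\<^sup>2 / (4 * \<sigma>\<^sup>2) \<le> c\<^sup>2 / (4 * \<sigma>\<^sup>2)"
proof -
  have "u\<^sup>2 \<le> c\<^sup>2"
    using assms by (metis abs_ge_zero abs_le_square_iff power2_abs power_mono)
  then show ?thesis
    by (simp add: divide_right_mono)
qed

theorem lemma12:
  fixes d r :: nat and s :: "real poly"
    and \<delta> \<sigma> \<gamma> R b :: real
  assumes "r \<ge> 2"
    and "\<delta> = real r powr (-7/2)"
    and "\<sigma> = sqrt (ln (1 / \<delta>)) / real r"
    and "\<gamma> = sqrt (5/2 * ln (real r))"
    and "R = 1 + \<gamma> * (2 + sqrt 2) * sqrt (real d) * \<sigma>"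
    and "b = (R + 1)^2 / (4 * \<sigma>^2)"
    and "is_s_poly b \<delta> s"
  shows "\<forall>x\<in>{-1..1}. \<forall>y\<in>{-R..R}.
           \<bar>Kr s \<sigma> x y - 1 / (sqrt (2 * pi) * \<sigma>) * exp (- ((x - y)^2 / (2 * \<sigma>^2)))\<bar>
             \<le> 3 * \<delta> / (sqrt (2 * pi) * \<sigma>)"
proof (intro ballI)
  fix x y :: real
  assume "x \<in> {-1..1}" and "y \<in> {-R..R}"
  then have "\<bar>x - y\<bar> \<le> R + 1"
    by auto
  then have "(x - y)\<^sup>2 / (4 * \<sigma>\<^sup>2) \<in> {0..b}"
    using assms(6) by (simp add: divide_four_sq_le_of_abs_le)
  then have approx: "\<bar>exp (- ((x - y)\<^sup>2 / (4 * \<sigma>\<^sup>2))) - poly s ((x - y)\<^sup>2 / (4 * \<sigma>\<^sup>2))\<bar> \<le> \<delta>"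
    using assms(7) unfolding is_s_poly_def by blast
  have r_gt_1: "real r > 1"
    using assms(1) by simp
  have "0 < \<delta>" and "\<delta> < 1"
    unfolding assms(2) using r_gt_1 by (simp_all add: powr_less_one)
  then have "\<sigma> > 0"
    unfolding assms(3) using r_gt_1 by simp
  with \<open>\<delta> < 1\<close> approx show "\<bar>Kr s \<sigma> x y - 1 / (sqrt (2 * pi) * \<sigma>) * exp (- ((x - y)^2 / (2 * \<sigma>^2)))\<bar>
             \<le> 3 * \<delta> / (sqrt (2 * pi) * \<sigma>)"
    by (intro Kr_gaussian_error_le) auto
qed

end
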